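(* Let $(A_*,\partial,\ell)$ be an ascending chain complex over a field $\kappa$ with $H_k(A_* )=0$ for all $k$, and suppose each $(A_k,\ell|_{A_k})$ satisfies the best approximation property. Then there are index sets $\mathcal{I}_k$ and, for each $k$, an $\ell$-orthogonal basis $\{x^k_i: i\in\mathcal{I}_{k+1}\}\cup\{y^k_j:j\in\mathcal{I}_k\}$ of $A_k$ such that $\partial y^{k+1}_i=x^k_i$ for every $i\in\mathcal{I}_{k+1}$.
   Context: An ascending chain complex over $\kappa$ is a triple $(C_*,\partial,\ell)$ where $(C_*=\bigoplus_{k\in\mathbb{Z}}C_k,\partial)$ is a chain complex of $\kappa$-vector spaces and $\ell\colon C_*\to\mathbb{R}\cup\{-\infty\}$ satisfies: $\ell(x)=-\infty$ iff $x=0$; $\ell(\sum_i c_ix_i)\le\max\{\ell(x_i): c_i\neq 0\}$, with equality if the $x_i$ lie in pairwise distinct degrees; and $\ell(\partial x)\le\ell(x)$. A subset $S\subset V\setminus\{0\}$ is $\ell$-orthogonal if $\ell(\sum c_iv_i)=\max\{\ell(v_i):c_i\neq0\}$ for all finitely many distinct $v_i\in S$, $c_i\in\kappa$. A filtered vector space $(V,\ell)$ satisfies the best approximation property if for every proper subspace $W\subsetneq V$ and every $v\in V\setminus W$ there is $w_0\in W$ with $\ell(v-w_0)\le\ell(v-w)$ for all $w\in W$. *)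

theory Defs
  imports Main "HOL-Library.Extended_Real"
begin

text \<open>
  The total space C_* of a Z-graded chain complex of vector spaces over a field 'k
  is modelled as an ambient vector space 'v (scalar multiplication scale) together
  with a family of subspaces C k (k :: int) such that C_* is their internal direct sum.
  Filtration values lie in ereal; R union {-infinity} is encoded by requiring l x < infinity.
\<close>

definition internal_direct_sum ::
  "('k::field \<Rightarrow> 'v::ab_group_add \<Rightarrow> 'v) \<Rightarrow> (int \<Rightarrow> 'v set) \<Rightarrow> bool" where
  "internal_direct_sum scale C \<longleftrightarrow>
     (\<forall>v. \<exists>!f :: int \<Rightarrow> 'v. finite {k. f k \<noteq> 0} \<and> (\<forall>k. f k \<in> C k) \<and>
            v = (\<Sum>k\<in>{k. f k \<noteq> 0}. f k))"

definition chain_complex ::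
  "('k::field \<Rightarrow> 'v::ab_group_add \<Rightarrow> 'v) \<Rightarrow> (int \<Rightarrow> 'v set) \<Rightarrow> ('v \<Rightarrow> 'v) \<Rightarrow> bool" where
  "chain_complex scale C d \<longleftrightarrow>
     vector_space scale \<and>
     (\<forall>k. module.subspace scale (C k)) \<and>
     internal_direct_sum scale C \<and>
     Vector_Spaces.linear scale scale d \<and>
     (\<forall>k. d ` C k \<subseteq> C (k - 1)) \<and>
     (\<forall>x. d (d x) = 0)"

definition ascending_chain_complex ::
  "('k::field \<Rightarrow> 'v::ab_group_add \<Rightarrow> 'v) \<Rightarrow> (int \<Rightarrow> 'v set) \<Rightarrow> ('v \<Rightarrow> 'v) \<Rightarrow> ('v \<Rightarrow> ereal) \<Rightarrow> bool" where
  "ascending_chain_complex scale C d l \<longleftrightarrow>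
     chain_complex scale C d \<and>
     (\<forall>x. l x \<noteq> \<infinity>) \<and>
     (\<forall>x. l x = -\<infinity> \<longleftrightarrow> x = 0) \<and>
     (\<forall>(S :: 'v set) (c :: 'v \<Rightarrow> 'k). finite S \<longrightarrow>
        l (\<Sum>x\<in>S. scale (c x) x) \<le> Sup {l x | x. x \<in> S \<and> c x \<noteq> 0}) \<and>
     (\<forall>(S :: 'v set) (c :: 'v \<Rightarrow> 'k) (deg :: 'v \<Rightarrow> int).
        finite S \<longrightarrow> inj_on deg S \<longrightarrow> (\<forall>x\<in>S. x \<in> C (deg x)) \<longrightarrow>
        l (\<Sum>x\<in>S. scale (c x) x) = Sup {l x | x. x \<in> S \<and> c x \<noteq> 0}) \<and>
     (\<forall>x. l (d x) \<le> l x)"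

definition acyclic_complex :: "(int \<Rightarrow> 'v::ab_group_add set) \<Rightarrow> ('v \<Rightarrow> 'v) \<Rightarrow> bool" where
  "acyclic_complex C d \<longleftrightarrow> (\<forall>k. {x \<in> C k. d x = 0} \<subseteq> d ` C (k + 1))"

text \<open>l-orthogonal subsets of V (Sup of the empty set is -infinity = max of the empty set).\<close>
definition l_orthogonal ::
  "('k::field \<Rightarrow> 'v::ab_group_add \<Rightarrow> 'v) \<Rightarrow> ('v \<Rightarrow> ereal) \<Rightarrow> 'v set \<Rightarrow> 'v set \<Rightarrow> bool" where
  "l_orthogonal scale l V S \<longleftrightarrow> S \<subseteq> V - {0} \<and>
     (\<forall>T (c :: 'v \<Rightarrow> 'k). finite T \<longrightarrow> T \<subseteq> S \<longrightarrow>
        l (\<Sum>v\<in>T. scale (c v) v) = Sup {l v | v. v \<in> T \<and> c v \<noteq> 0})"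

definition best_approximation_property ::
  "('k::field \<Rightarrow> 'v::ab_group_add \<Rightarrow> 'v) \<Rightarrow> ('v \<Rightarrow> ereal) \<Rightarrow> 'v set \<Rightarrow> bool" where
  "best_approximation_property scale l V \<longleftrightarrow>
     (\<forall>W. module.subspace scale W \<longrightarrow> W \<subset> V \<longrightarrow>
        (\<forall>v \<in> V - W. \<exists>w0 \<in> W. \<forall>w \<in> W. l (v - w0) \<le> l (v - w)))"

end

theory Submission
  imports Defs
begin

text \<open>
  In each degree k one builds, by Zorn's lemma, a maximal set Y_k of chains that is
  orthogonal, orthogonal to the cycles Z_k, and has orthogonal boundaries.  Elements are added
  in increasing order of filtration: the next one is a minimiser of the filtration outside
  span (Y_k \<union> Z_k), corrected inside span Y_k so that its boundary becomes a best
  approximation residual modulo the boundary of span Y_k.  Maximality gives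
  A_k = span (Y_k \<union> Z_k), and acyclicity gives Z_k = d (span Y_(k+1)), so
  d Y_(k+1) \<union> Y_k is the required basis of A_k, with x_i = d y_i.  The minimiser exists
  by the best approximation property: otherwise perpendicular residuals at pairwise different
  levels would be independent modulo the subspace, and a best approximation from a suitable
  hyperplane would lie below all of them.
\<close>

lemma (in module) span_finite_subset:
  assumes "x \<in> span S"
  obtains T where "finite T" "T \<subseteq> S" "x \<in> span T"
proof -
  from assms obtain T r where T: "finite T" "T \<subseteq> S" "x = (\<Sum>a\<in>T. r a *s a)"
    unfolding span_explicit by blast
  then have "x \<in> span T"
    by (auto intro: span_sum span_scale span_base)
  with T that show thesis by blast
qed

lemma (in module) span_Union_chain:
  assumes "subset.chain X C" "C \<noteq> {}" "a \<in> span (\<Union>C)"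
  obtains Y where "Y \<in> C" "a \<in> span Y"
proof -
  from assms(3) obtain T where T: "finite T" "T \<subseteq> \<Union>C" "a \<in> span T"
    by (rule span_finite_subset)
  then obtain Y where "Y \<in> C" "T \<subseteq> Y"
    using finite_subset_Union_chain[OF T(1,2) assms(2,1)] by blast
  with T(3) show thesis
    using that span_mono by blast
qed

lemma subset_chain_image:
  assumes "subset.chain X C"
  shows "subset.chain UNIV ((`) f ` C)"
proof -
  have "Y \<subseteq> Y' \<or> Y' \<subseteq> Y" if "Y \<in> C" "Y' \<in> C" for Y Y'
    using assms that unfolding subset.chain_def by blast
  then have "f ` Y \<subseteq> f ` Y' \<or> f ` Y' \<subseteq> f ` Y" if "Y \<in> C" "Y' \<in> C" for Y Y'
    using that by (meson image_mono)
  then show ?thesis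
    unfolding subset.chain_def by blast
qed

lemma obtain_inj_on_image_eq:
  obtains U where "U \<subseteq> R" "inj_on f U" "f ` U = f ` R"
proof
  let ?U = "inv_into R f ` f ` R"
  show "?U \<subseteq> R"
    by (auto intro: inv_into_into)
  show "inj_on f ?U"
    by (rule inj_onI) (auto simp: f_inv_into_f)
  show "f ` ?U = f ` R"
  proof
    show "f ` ?U \<subseteq> f ` R"
      using \<open>?U \<subseteq> R\<close> by blast
    show "f ` R \<subseteq> f ` ?U"
      by (auto simp: image_iff f_inv_into_f)
  qed
qed

lemma finite_inj_on_strict_argmax:
  fixes f :: "'a \<Rightarrow> 'b::linorder"
  assumes "finite G" "G \<noteq> {}" "inj_on f G"
  obtains m where "m \<in> G" "\<And>v. v \<in> G \<Longrightarrow> v \<noteq> m \<Longrightarrow> f v < f m"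
proof -
  have "Max (f ` G) \<in> f ` G"
    using assms(1,2) by (intro Max_in) auto
  then obtain m where m: "m \<in> G" "f m = Max (f ` G)"
    by (metis imageE)
  have "f v < f m" if "v \<in> G" "v \<noteq> m" for v
  proof -
    have "f v \<le> f m"
      using m(2) assms(1) that(1) by simp
    moreover have "f v \<noteq> f m"
      using inj_onD[OF assms(3) _ that(1) m(1)] that(2) by blast
    ultimately show ?thesis
      by simp
  qed
  with m(1) show thesis
    by (rule that)
qed

lemma vector_space_field_mult: "vector_space ((*) :: 'k::field \<Rightarrow> 'k \<Rightarrow> 'k)"
  by unfold_locales (simp_all add: algebra_simps)

locale filtered_vector_space = vector_space scale
  for scale :: "'k::field \<Rightarrow> 'v::ab_group_add \<Rightarrow> 'v" (infixr "*s" 75) +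
  fixes l :: "'v \<Rightarrow> ereal"
  assumes l_eq_bot_iff: "l x = -\<infinity> \<longleftrightarrow> x = 0"
    and l_sum_le: "finite S \<Longrightarrow> l (\<Sum>x\<in>S. c x *s x) \<le> Sup {l x | x. x \<in> S \<and> c x \<noteq> 0}"
begin

lemma l_0 [simp]: "l 0 = -\<infinity>"
  using l_eq_bot_iff by simp

lemma l_gt_bot: "x \<noteq> 0 \<Longrightarrow> -\<infinity> < l x"
  using l_eq_bot_iff[of x] by auto

lemma l_scale_le: "l (c *s x) \<le> l x"
proof -
  have "l (\<Sum>y\<in>{x}. c *s y) \<le> Sup {l y | y. y \<in> {x} \<and> c \<noteq> 0}"
    by (rule l_sum_le) simp
  also have "\<dots> \<le> l x"
    by (auto intro!: Sup_least)
  finally show ?thesis by simp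
qed

lemma l_scale: "c \<noteq> 0 \<Longrightarrow> l (c *s x) = l x"
  by (metis antisym l_scale_le scale_left_imp_eq scale_scale right_inverse scale_one)

lemma l_minus [simp]: "l (- x) = l x"
  using l_scale[of "-1" x] by simp

lemma l_add_le: "l (x + y) \<le> max (l x) (l y)"
proof (cases "x = y")
  case True
  have "(1 + 1) *s x = x + x"
    by (simp only: scale_left_distrib scale_one)
  then show ?thesis
    using True l_scale_le[of "1 + 1" x] by simp
next
  case False
  have "l (\<Sum>z\<in>{x, y}. 1 *s z) \<le> Sup {l z | z. z \<in> {x, y} \<and> (1::'k) \<noteq> 0}"
    by (rule l_sum_le) simp
  also have "\<dots> \<le> max (l x) (l y)"
    by (auto intro!: Sup_least)
  finally show ?thesis
    using False by simp
qed

lemma l_diff_le: "l (x - y) \<le> max (l x) (l y)"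
  using l_add_le[of x "- y"] by simp

lemma l_add_eq_of_less:
  assumes "l x < l y"
  shows "l (x + y) = l y"
proof (rule antisym)
  show "l (x + y) \<le> l y"
    using l_add_le[of x y] assms by simp
  have "l y \<le> max (l (x + y)) (l x)"
    using l_diff_le[of "x + y" x] by simp
  then show "l y \<le> l (x + y)"
    using assms by (auto simp: max_def split: if_splits)
qed

lemma l_span_le:
  assumes "a \<in> span S" "\<And>s. s \<in> S \<Longrightarrow> l s \<le> t"
  shows "l a \<le> t"
  using assms
proof (induction rule: span_induct_alt)
  case (step c x y)
  have "l (c *s x) \<le> t"
    using l_scale_le step order_trans by blast
  with step show ?case
    by (intro order_trans[OF l_add_le]) simp
qed simp

lemma l_sum_less:
  assumes "finite F" "\<And>v. v \<in> F \<Longrightarrow> l v < t" "-\<infinity> < t"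
  shows "l (\<Sum>v\<in>F. c v *s v) < t"
  using assms
proof (induction rule: finite_induct)
  case (insert x F)
  have "l (c x *s x) < t"
    using l_scale_le insert order.strict_trans1 by blast
  with insert show ?case
    by (simp add: le_less_trans[OF l_add_le])
qed simp


definition perp :: "'v \<Rightarrow> 'v set \<Rightarrow> bool" where
  "perp p M \<longleftrightarrow> (\<forall>w\<in>M. l p \<le> l (p + w))"

lemma perp_add_eq_max:
  assumes "perp p M" "a \<in> M"
  shows "l (p + a) = max (l p) (l a)"
proof (cases "l p < l a")
  case True
  then show ?thesis
    using l_add_eq_of_less[of p a] by simp
next
  case False
  then show ?thesis
    using assms l_add_le[of p a] unfolding perp_def by (auto intro: antisym)
qed

lemma perp_scale:
  assumes "subspace M" "perp p M"
  shows "perp (c *s p) M"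
  unfolding perp_def
proof
  fix w assume "w \<in> M"
  show "l (c *s p) \<le> l (c *s p + w)"
  proof (cases "c = 0")
    case False
    have "c *s p + w = c *s (p + inverse c *s w)"
      using False by (simp add: scale_right_distrib)
    moreover have "l p \<le> l (p + inverse c *s w)"
      using assms \<open>w \<in> M\<close> subspace_scale unfolding perp_def by blast
    ultimately show ?thesis
      using False l_scale by simp
  qed simp
qed

lemma perp_subset: "perp p M \<Longrightarrow> M' \<subseteq> M \<Longrightarrow> perp p M'"
  unfolding perp_def by auto

lemma perp_in_subspace_eq_0:
  assumes "subspace M" "perp p M" "p \<in> M"
  shows "p = 0"
proof -
  have "l p \<le> l (p + - p)"
    using assms subspace_neg unfolding perp_def by blast
  then show ?thesis
    using l_eq_bot_iff by simp
qed

lemma perp_of_min_outside: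
  assumes "subspace V" "subspace W" "W \<subseteq> V" "y \<in> V" "y \<notin> W"
    and min: "\<And>u. u \<in> V \<Longrightarrow> u \<notin> W \<Longrightarrow> l y \<le> l u"
  shows "perp y W"
  unfolding perp_def
proof
  fix w assume "w \<in> W"
  then have "y + w \<in> V" "y + w \<notin> W"
    using assms subspace_add subspace_diff by (blast, metis add_diff_cancel)
  then show "l y \<le> l (y + w)"
    by (rule min)
qed

lemma best_approximation_residual:
  assumes bap: "best_approximation_property scale l V"
    and "subspace V" "subspace W" "W \<subseteq> V" "x \<in> V" "x \<notin> W"
  obtains r where "r \<in> V" "r \<notin> W" "x - r \<in> W" "perp r W" "l r \<le> l x"
proof -
  obtain w0 where w0: "w0 \<in> W" "\<And>w. w \<in> W \<Longrightarrow> l (x - w0) \<le> l (x - w)"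
    using assms unfolding best_approximation_property_def by blast
  have "perp (x - w0) W"
    unfolding perp_def
  proof
    fix w assume "w \<in> W"
    then have "l (x - w0) \<le> l (x - (w0 - w))"
      using w0 \<open>subspace W\<close> subspace_diff by blast
    then show "l (x - w0) \<le> l (x - w0 + w)"
      by (simp add: algebra_simps)
  qed
  moreover have "x - w0 \<in> V"
    using assms w0(1) subspace_diff by blast
  moreover have "x - w0 \<notin> W"
    using assms w0(1) subspace_add by fastforce
  moreover have "l (x - w0) \<le> l x"
    using w0(2)[of 0] \<open>subspace W\<close> subspace_0 by simp
  ultimately show thesis
    using that w0(1) by simp
qed

text \<open>A local reformulation of l-orthogonality (see orthogonal_set_l_orthogonal) that is easy to
  maintain under insertion and unions of chains.\<close>
definition orthogonal_set :: "'v set \<Rightarrow> bool" where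
  "orthogonal_set S \<longleftrightarrow> (\<forall>s\<in>S. s \<noteq> 0 \<and> perp s (span (S - {s})))"

lemma orthogonal_set_le_l_sum:
  assumes S: "orthogonal_set S" and F: "finite F" "F \<subseteq> S" "v \<in> F" and "c v \<noteq> 0"
  shows "l v \<le> l (\<Sum>u\<in>F. c u *s u)"
proof -
  have "(\<Sum>u\<in>F. c u *s u) = c v *s v + (\<Sum>u\<in>F - {v}. c u *s u)"
    using F by (simp add: sum.remove)
  moreover have "(\<Sum>u\<in>F - {v}. c u *s u) \<in> span (S - {v})"
    using F by (intro span_sum span_scale span_base) auto
  moreover have "perp (c v *s v) (span (S - {v}))"
    using S F by (intro perp_scale) (auto simp: orthogonal_set_def)
  ultimately have "l (c v *s v) \<le> l (\<Sum>u\<in>F. c u *s u)"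
    unfolding perp_def by simp
  then show ?thesis
    using l_scale[OF \<open>c v \<noteq> 0\<close>] by simp
qed

lemma orthogonal_set_l_orthogonal:
  assumes "orthogonal_set S" "S \<subseteq> V"
  shows "l_orthogonal scale l V S"
  unfolding l_orthogonal_def
proof (intro conjI allI impI)
  show "S \<subseteq> V - {0}"
    using assms by (auto simp: orthogonal_set_def)
  fix T c assume "finite T" "T \<subseteq> S"
  then show "l (\<Sum>v\<in>T. c v *s v) = Sup {l v | v. v \<in> T \<and> c v \<noteq> 0}"
    using orthogonal_set_le_l_sum[OF assms(1)]
    by (intro antisym l_sum_le Sup_least) auto
qed

lemma orthogonal_set_independent:
  assumes "orthogonal_set S"
  shows "independent S"
  unfolding independent_explicit_module
proof (intro allI impI; rule ccontr)
  fix T c v assume "finite T" "T \<subseteq> S" "(\<Sum>v\<in>T. c v *s v) = 0" "v \<in> T" "c v \<noteq> 0"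
  then have "l v \<le> l 0"
    using orthogonal_set_le_l_sum[OF assms] by metis
  then show False
    using assms \<open>v \<in> T\<close> \<open>T \<subseteq> S\<close> l_eq_bot_iff by (auto simp: orthogonal_set_def)
qed

lemma perp_span_commute:
  assumes "\<And>b. b \<in> span T \<Longrightarrow> perp b (span S)" "a \<in> span S"
  shows "perp a (span T)"
  unfolding perp_def
proof
  fix b assume "b \<in> span T"
  then have "l (b + a) = max (l b) (l a)"
    using assms by (intro perp_add_eq_max) auto
  then show "l a \<le> l (a + b)"
    by (simp add: ac_simps)
qed

lemma orthogonal_set_perp_span_Un:
  assumes S: "orthogonal_set S" "x \<in> S" and perp_ST: "\<And>a. a \<in> span S \<Longrightarrow> perp a (span T)"
  shows "perp x (span (S \<union> T - {x}))"
  unfolding perp_def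
proof
  fix w assume "w \<in> span (S \<union> T - {x})"
  then have "w \<in> span ((S - {x}) \<union> T)"
    using span_mono[of "S \<union> T - {x}" "(S - {x}) \<union> T"] by blast
  then obtain a b where w: "w = a + b" "a \<in> span (S - {x})" "b \<in> span T"
    unfolding span_Un by blast
  have "l x \<le> l (x + a)"
    using S w(2) unfolding orthogonal_set_def perp_def by blast
  also have "\<dots> \<le> l (x + a + b)"
    using perp_ST[of "x + a"] S(2) w(2,3) span_mono[of "S - {x}" S]
    unfolding perp_def by (blast intro: span_add span_base)
  finally show "l x \<le> l (x + w)"
    using w(1) by (simp add: ac_simps)
qed

lemma orthogonal_set_Un:
  assumes S: "orthogonal_set S" and T: "orthogonal_set T"
    and perp_TS: "\<And>b. b \<in> span T \<Longrightarrow> perp b (span S)"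
  shows "orthogonal_set (S \<union> T)"
  unfolding orthogonal_set_def
proof
  fix x assume "x \<in> S \<union> T"
  then show "x \<noteq> 0 \<and> perp x (span (S \<union> T - {x}))"
  proof
    assume "x \<in> S"
    then show ?thesis
      using S orthogonal_set_perp_span_Un perp_span_commute[OF perp_TS]
      unfolding orthogonal_set_def by blast
  next
    assume "x \<in> T"
    then have "perp x (span (T \<union> S - {x}))"
      using T perp_TS by (intro orthogonal_set_perp_span_Un)
    then show ?thesis
      using T \<open>x \<in> T\<close> unfolding orthogonal_set_def by (simp add: Un_commute)
  qed
qed

lemma orthogonal_set_insert:
  assumes "orthogonal_set S" "y \<noteq> 0" "perp y (span S)"
  shows "orthogonal_set (insert y S)"
proof -
  have "orthogonal_set {y}"
    using assms(2) by (simp add: orthogonal_set_def perp_def)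
  moreover have "perp b (span S)" if "b \<in> span {y}" for b
    using that assms(3) perp_scale[OF subspace_span] by (auto simp: span_singleton)
  ultimately have "orthogonal_set (S \<union> {y})"
    by (rule orthogonal_set_Un[OF assms(1)])
  then show ?thesis
    by simp
qed

lemma orthogonal_set_Union_chain:
  assumes "subset.chain X C" "\<And>S. S \<in> C \<Longrightarrow> orthogonal_set S"
  shows "orthogonal_set (\<Union>C)"
  unfolding orthogonal_set_def perp_def
proof (intro ballI conjI)
  fix s w assume s: "s \<in> \<Union>C" and w: "w \<in> span (\<Union>C - {s})"
  from w obtain T where T: "finite T" "T \<subseteq> \<Union>C - {s}" "w \<in> span T"
    by (rule span_finite_subset)
  then obtain S where S: "S \<in> C" "insert s T \<subseteq> S"
    using finite_subset_Union_chain[OF _ _ _ assms(1), of "insert s T"] s by blast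
  then have "w \<in> span (S - {s})"
    using T span_mono[of T "S - {s}"] by blast
  then show "l s \<le> l (s + w)"
    using assms(2)[OF S(1)] S(2) unfolding orthogonal_set_def perp_def by blast
next
  fix s assume "s \<in> \<Union>C"
  then show "s \<noteq> 0"
    using assms(2) unfolding orthogonal_set_def by blast
qed

lemma perp_span_insert:
  assumes "\<And>a. a \<in> span Y \<Longrightarrow> perp a M" and y: "perp y (span (Y \<union> M))"
    and a: "a \<in> span (insert y Y)"
  shows "perp a M"
  unfolding perp_def
proof
  fix z assume "z \<in> M"
  obtain c where a': "a - c *s y \<in> span Y"
    using a span_breakdown_eq by blast
  define a' where "a' = a - c *s y"
  have cy: "perp (c *s y) (span (Y \<union> M))"
    using perp_scale[OF subspace_span y] .
  have a'_in: "a' \<in> span (Y \<union> M)" and a'z_in: "a' + z \<in> span (Y \<union> M)"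
    using a' \<open>z \<in> M\<close> span_mono[of Y "Y \<union> M"] span_base[of z "Y \<union> M"]
    unfolding a'_def by (auto intro: span_add)
  have "a = c *s y + a'" "a + z = c *s y + (a' + z)"
    unfolding a'_def by simp_all
  then have "l a = max (l (c *s y)) (l a')" "l (a + z) = max (l (c *s y)) (l (a' + z))"
    using perp_add_eq_max[OF cy a'_in] perp_add_eq_max[OF cy a'z_in] by (simp_all only:)
  moreover have "l a' \<le> l (a' + z)"
    using assms(1) a' \<open>z \<in> M\<close> unfolding a'_def perp_def by blast
  ultimately show "l a \<le> l (a + z)"
    by (auto simp: max_def)
qed

definition independent_mod :: "'v set \<Rightarrow> 'v set \<Rightarrow> bool" where
  "independent_mod W U \<longleftrightarrow>
     (\<forall>F c. finite F \<longrightarrow> F \<subseteq> U \<longrightarrow> (\<Sum>u\<in>F. c u *s u) \<in> W \<longrightarrow> (\<forall>u\<in>F. c u = 0))"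

lemma independent_mod_disjoint: "independent_mod W U \<Longrightarrow> U \<inter> W = {}"
  unfolding independent_mod_def by (force dest: spec[of _ "{_}"] spec[of _ "\<lambda>_. 1"])

text \<open>In a relation modulo W, the term of highest level cannot be cancelled.\<close>
lemma perp_independent_mod:
  assumes W: "subspace W" and U: "\<And>u. u \<in> U \<Longrightarrow> u \<notin> W \<and> perp u W"
    and inj: "inj_on l U"
  shows "independent_mod W U"
  unfolding independent_mod_def
proof (intro allI impI ballI; rule ccontr)
  fix F c u assume F: "finite F" "F \<subseteq> U" and inW: "(\<Sum>u\<in>F. c u *s u) \<in> W"
    and "u \<in> F" "c u \<noteq> 0"
  define G where "G = {u \<in> F. c u \<noteq> 0}"
  have G: "finite G" "G \<noteq> {}" "G \<subseteq> U"
    using F \<open>u \<in> F\<close> \<open>c u \<noteq> 0\<close> unfolding G_def by auto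
  obtain m where m: "m \<in> G" "\<And>v. v \<in> G \<Longrightarrow> v \<noteq> m \<Longrightarrow> l v < l m"
    using finite_inj_on_strict_argmax[OF G(1,2) inj_on_subset[OF inj G(3)]] by blast
  have m_perp: "m \<notin> W" "perp m W" and cm: "c m \<noteq> 0"
    using U m(1) G(3) unfolding G_def by auto
  define R where "R = (\<Sum>v\<in>G - {m}. c v *s v)"
  have "l R < l m"
    unfolding R_def
  proof (rule l_sum_less)
    show "l v < l m" if "v \<in> G - {m}" for v
      using that m(2) by blast
    have "m \<noteq> 0"
      using m_perp(1) subspace_0[OF W] by auto
    then show "-\<infinity> < l m"
      by (rule l_gt_bot)
  qed (use G in simp)
  have "(\<Sum>u\<in>F. c u *s u) = (\<Sum>u\<in>G. c u *s u)"
    unfolding G_def by (rule sum.mono_neutral_right) (use F in auto)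
  also have "\<dots> = c m *s m + R"
    unfolding R_def using G(1) m(1) by (simp add: sum.remove)
  finally have "m + - (inverse (c m) *s (\<Sum>u\<in>F. c u *s u)) = - (inverse (c m) *s R)"
    using cm by (simp add: scale_right_distrib)
  moreover have "- (inverse (c m) *s (\<Sum>u\<in>F. c u *s u)) \<in> W"
    by (rule subspace_neg[OF W subspace_scale[OF W inW]])
  ultimately have "l m \<le> l (- (inverse (c m) *s R))"
    using m_perp(2) unfolding perp_def by metis
  then have "l m \<le> l R"
    using cm l_scale by simp
  with \<open>l R < l m\<close> show False
    by simp
qed

lemma independent_mod_Un:
  assumes "subspace W" "independent B" "B \<subseteq> W" "independent_mod W U"
  shows "independent (B \<union> U)"
  unfolding independent_explicit_module
proof (intro allI impI)
  fix T c v assume T: "finite T" "T \<subseteq> B \<union> U" "(\<Sum>v\<in>T. c v *s v) = 0" "v \<in> T"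
  have split: "(\<Sum>v\<in>T \<inter> U. c v *s v) + (\<Sum>v\<in>T - U. c v *s v) = 0"
    using T(1,3) by (simp add: sum.Int_Diff[symmetric])
  have "(\<Sum>v\<in>T - U. c v *s v) \<in> W"
    using assms(3) T(2) by (intro subspace_sum[OF assms(1)] subspace_scale[OF assms(1)]) auto
  moreover have "(\<Sum>v\<in>T \<inter> U. c v *s v) = - (\<Sum>v\<in>T - U. c v *s v)"
    using split by (simp add: eq_neg_iff_add_eq_0)
  ultimately have "(\<Sum>v\<in>T \<inter> U. c v *s v) \<in> W"
    using subspace_neg[OF assms(1)] by simp
  moreover have "finite (T \<inter> U)" "T \<inter> U \<subseteq> U"
    using T(1) by auto
  ultimately have U0: "\<forall>u\<in>T \<inter> U. c u = 0"
    using assms(4) unfolding independent_mod_def by blast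
  then have "(\<Sum>v\<in>T - U. c v *s v) = 0"
    using split by simp
  then have "\<forall>u\<in>T - U. c u = 0"
    using independentD[OF assms(2), of "T - U" c] T(1,2) by auto
  with U0 T(4) show "c v = 0"
    by blast
qed

lemma independent_mod_hyperplane:
  assumes V: "subspace V" and W: "subspace W" "W \<subseteq> V" and U: "U \<subseteq> V" "independent_mod W U"
    and "v \<in> U"
  obtains H where "subspace H" "W \<subseteq> H" "H \<subseteq> V" "v \<notin> H" "\<And>u. u \<in> U \<Longrightarrow> v - u \<in> H"
proof -
  obtain B where B: "B \<subseteq> W" "independent B" "W \<subseteq> span B"
    using maximal_independent_subset[of W] by blast
  interpret pair: vector_space_pair scale "(*) :: 'k \<Rightarrow> 'k \<Rightarrow> 'k"
    by (simp add: vector_space_pair_def vector_space_axioms vector_space_field_mult)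
  obtain \<phi> where \<phi>: "Vector_Spaces.linear scale (*) \<phi>"
      "\<And>x. x \<in> B \<union> U \<Longrightarrow> \<phi> x = (if x \<in> U then 1 else 0)"
    using pair.linear_independent_extend[OF independent_mod_Un[OF W(1) B(2,1) U(2)],
        of "\<lambda>x. if x \<in> U then 1 else 0"]
    by blast
  interpret \<phi>: Vector_Spaces.linear scale "(*)" \<phi>
    by (fact \<phi>(1))
  define H where "H = V \<inter> {x. \<phi> x = 0}"
  have "B \<inter> U = {}"
    using B(1) independent_mod_disjoint[OF U(2)] by blast
  then have "span B \<subseteq> {x. \<phi> x = 0}"
    using \<phi>(2) by (intro span_minimal \<phi>.subspace_kernel) auto
  then have "W \<subseteq> H"
    using B(3) W(2) unfolding H_def by blast
  moreover have "subspace H"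
    unfolding H_def using V \<phi>.subspace_kernel by (rule subspace_inter)
  moreover have "v - u \<in> H" if "u \<in> U" for u
    using that \<open>v \<in> U\<close> U(1) \<phi>(2) \<phi>.diff unfolding H_def
    by (auto intro: subspace_diff[OF V])
  moreover have "v \<notin> H"
    using \<open>v \<in> U\<close> \<phi>(2) unfolding H_def by simp
  ultimately show thesis
    using that unfolding H_def by blast
qed

lemma independent_mod_lower_bound:
  assumes bap: "best_approximation_property scale l V"
    and V: "subspace V" and W: "subspace W" "W \<subseteq> V"
    and U: "U \<subseteq> V" "independent_mod W U" "U \<noteq> {}"
  obtains p where "p \<in> V" "p \<notin> W" "\<And>u. u \<in> U \<Longrightarrow> l p \<le> l u"
proof -
  obtain v where "v \<in> U"
    using U(3) by blast
  then obtain H where H: "subspace H" "W \<subseteq> H" "H \<subseteq> V" "v \<notin> H"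
      "\<And>u. u \<in> U \<Longrightarrow> v - u \<in> H"
    using independent_mod_hyperplane[OF V W U(1,2)] by blast
  obtain h0 where h0: "h0 \<in> H" "\<And>h. h \<in> H \<Longrightarrow> l (v - h0) \<le> l (v - h)"
    using bap H \<open>v \<in> U\<close> U(1) unfolding best_approximation_property_def by blast
  have "v - h0 \<in> V"
    using \<open>v \<in> U\<close> U(1) H(3) h0(1) subspace_diff[OF V] by blast
  moreover have "v - h0 \<notin> W"
    using H(2,4) h0(1) subspace_add[OF H(1)] by (metis diff_add_cancel subsetD)
  moreover have "l (v - h0) \<le> l u" if "u \<in> U" for u
    using h0(2)[OF H(5)[OF that]] by simp
  ultimately show thesis
    by (rule that)
qed

text \<open>Otherwise one perpendicular residual for each level they attain gives a set that is
  independent modulo W, and its lower bound would lie below every residual.\<close>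
lemma best_approximation_min_outside:
  assumes bap: "best_approximation_property scale l V"
    and V: "subspace V" and W: "subspace W" "W \<subseteq> V" "W \<noteq> V"
  obtains u0 where "u0 \<in> V" "u0 \<notin> W" "\<And>u. u \<in> V \<Longrightarrow> u \<notin> W \<Longrightarrow> l u0 \<le> l u"
proof (rule ccontr)
  assume no_min: "\<not> thesis"
  define R where "R = {r \<in> V. r \<notin> W \<and> perp r W}"
  have residual_below: "\<exists>r\<in>R. l r \<le> l x" if "x \<in> V" "x \<notin> W" for x
    using best_approximation_residual[OF bap V W(1,2) that] unfolding R_def by blast
  obtain U where U: "U \<subseteq> R" "inj_on l U" "l ` U = l ` R"
    by (rule obtain_inj_on_image_eq)
  have "independent_mod W U"
    using U(1,2) unfolding R_def by (intro perp_independent_mod[OF W(1)]) auto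
  moreover have "U \<noteq> {}"
  proof -
    obtain x where "x \<in> V" "x \<notin> W"
      using W(2,3) by blast
    then obtain r where "r \<in> R"
      using residual_below by blast
    then show ?thesis
      using U(3) by auto
  qed
  moreover have "U \<subseteq> V"
    using U(1) unfolding R_def by blast
  ultimately obtain p where p: "p \<in> V" "p \<notin> W" "\<And>u. u \<in> U \<Longrightarrow> l p \<le> l u"
    using independent_mod_lower_bound[OF bap V W(1,2)] by blast
  have "\<not> (\<forall>u. u \<in> V \<longrightarrow> u \<notin> W \<longrightarrow> l p \<le> l u)"
    using that[OF p(1,2)] no_min by blast
  then obtain u where u: "u \<in> V" "u \<notin> W" "l u < l p"
    by (auto simp: not_le)
  then obtain r where r: "r \<in> R" "l r \<le> l u"
    using residual_below by blast
  then have "l r \<in> l ` U"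
    using U(3) by simp
  then obtain q where "q \<in> U" "l r = l q"
    by (rule imageE)
  then have "l p \<le> l r"
    using p(3) by simp
  with r(2) u(3) show False
    by simp
qed

end

locale acyclic_filtered_complex =
  fixes scale :: "'k::field \<Rightarrow> 'v::ab_group_add \<Rightarrow> 'v" (infixr "*s" 75)
    and A :: "int \<Rightarrow> 'v set" and d :: "'v \<Rightarrow> 'v" and l :: "'v \<Rightarrow> ereal"
  assumes ascending: "ascending_chain_complex scale A d l"
    and acyclic: "acyclic_complex A d"
    and best_approximation: "best_approximation_property scale l (A k)"

sublocale acyclic_filtered_complex \<subseteq> filtered_vector_space scale l
  using ascending
  unfolding ascending_chain_complex_def chain_complex_def
    filtered_vector_space_def filtered_vector_space_axioms_def
  by blast

sublocale acyclic_filtered_complex \<subseteq> d: Vector_Spaces.linear scale scale d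
  using ascending unfolding ascending_chain_complex_def chain_complex_def by blast

context acyclic_filtered_complex
begin

lemma chain_complex: "chain_complex scale A d"
  using ascending unfolding ascending_chain_complex_def by blast

lemma subspace_A: "subspace (A k)"
  using chain_complex unfolding chain_complex_def by blast

lemma d_in_A: "x \<in> A k \<Longrightarrow> d x \<in> A (k - 1)"
  using chain_complex unfolding chain_complex_def by blast

lemma d_d: "d (d x) = 0"
  using chain_complex unfolding chain_complex_def by blast

definition cycles :: "int \<Rightarrow> 'v set" where
  "cycles k = {x \<in> A k. d x = 0}"

lemma subspace_cycles: "subspace (cycles k)"
proof -
  have "cycles k = A k \<inter> {x. d x = 0}"
    unfolding cycles_def by blast
  then show ?thesis
    using subspace_inter[OF subspace_A d.subspace_kernel] by (simp only:)
qed

lemma cycles_subset_A: "cycles k \<subseteq> A k"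
  unfolding cycles_def by blast

lemma d_in_cycles: "x \<in> A (k + 1) \<Longrightarrow> d x \<in> cycles k"
  using d_in_A[of x "k + 1"] d_d unfolding cycles_def by simp

lemma cycles_subset_span_d:
  assumes "Y \<subseteq> A (k + 1)" "A (k + 1) \<subseteq> span (Y \<union> cycles (k + 1))"
  shows "cycles k \<subseteq> span (d ` Y)"
proof
  fix z assume "z \<in> cycles k"
  then obtain x where "z = d x" "x \<in> A (k + 1)"
    using acyclic unfolding acyclic_complex_def cycles_def by blast
  moreover obtain a b where "x = a + b" "a \<in> span Y" "b \<in> span (cycles (k + 1))"
    using assms(2) \<open>x \<in> A (k + 1)\<close> unfolding span_Un by blast
  moreover have "span (cycles (k + 1)) \<subseteq> cycles (k + 1)"
    using span_minimal[OF order_refl subspace_cycles] .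
  ultimately have "z = d a" "a \<in> span Y"
    by (auto simp: d.add cycles_def)
  then show "z \<in> span (d ` Y)"
    by (simp add: d.span_image)
qed

text \<open>An admissible set is a partial complement of the cycles, built in increasing order of
  filtration: by the last clause its elements lie below every vector that it does not yet
  reach modulo cycles.\<close>
definition admissible :: "int \<Rightarrow> 'v set \<Rightarrow> bool" where
  "admissible k Y \<longleftrightarrow> Y \<subseteq> A k \<and> inj_on d Y \<and> orthogonal_set Y \<and> orthogonal_set (d ` Y) \<and>
     (\<forall>a\<in>span Y. perp a (cycles k)) \<and>
     (\<forall>y\<in>Y. \<forall>u\<in>A k - span (Y \<union> cycles k). l y \<le> l u)"

lemma admissible_empty: "admissible k {}"
  by (simp add: admissible_def orthogonal_set_def perp_def)

lemma admissible_Union_chain: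
  assumes chain: "subset.chain {Y. admissible k Y} C"
  shows "admissible k (\<Union>C)"
proof (cases "C = {}")
  case False
  have adm: "admissible k Y" if "Y \<in> C" for Y
    using chain that unfolding subset.chain_def by blast
  have comparable: "Y \<subseteq> Y' \<or> Y' \<subseteq> Y" if "Y \<in> C" "Y' \<in> C" for Y Y'
    using chain that unfolding subset.chain_def by blast
  have "inj_on d (\<Union>Y\<in>C. Y)"
    by (rule inj_on_UNION_chain[OF comparable]) (use adm in \<open>simp_all add: admissible_def\<close>)
  then have "inj_on d (\<Union>C)"
    by simp
  moreover have "orthogonal_set (\<Union>C)"
    using orthogonal_set_Union_chain[OF chain] adm unfolding admissible_def by blast
  moreover have "orthogonal_set (\<Union>((`) d ` C))"
    by (rule orthogonal_set_Union_chain[OF subset_chain_image[OF chain]])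
      (use adm in \<open>auto simp: admissible_def\<close>)
  moreover have "perp a (cycles k)" if "a \<in> span (\<Union>C)" for a
    using span_Union_chain[OF chain False that] adm unfolding admissible_def by metis
  moreover have "l y \<le> l u" if y: "y \<in> \<Union>C" and u: "u \<in> A k - span (\<Union>C \<union> cycles k)" for y u
  proof -
    obtain Y where "Y \<in> C" "y \<in> Y"
      using y by blast
    moreover have "span (Y \<union> cycles k) \<subseteq> span (\<Union>C \<union> cycles k)"
      using \<open>Y \<in> C\<close> by (intro span_mono) blast
    ultimately show ?thesis
      using adm u unfolding admissible_def by blast
  qed
  ultimately show ?thesis
    using adm unfolding admissible_def by (simp add: image_Union) blast
qed (simp add: admissible_empty)

lemma admissible_insert:
  assumes Y: "admissible k Y" and y: "y \<in> A k" "y \<notin> span (Y \<union> cycles k)"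
    and perp_y: "perp y (span (Y \<union> cycles k))" and perp_dy: "perp (d y) (span (d ` Y))"
    and min: "\<And>u. u \<in> A k \<Longrightarrow> u \<notin> span (Y \<union> cycles k) \<Longrightarrow> l y \<le> l u"
  shows "admissible k (insert y Y)"
proof -
  have "y \<notin> cycles k"
    using y(2) span_superset by blast
  then have "d y \<noteq> 0"
    using y(1) unfolding cycles_def by blast
  then have dy: "d y \<notin> span (d ` Y)"
    using perp_in_subspace_eq_0[OF subspace_span perp_dy] by blast
  have "y \<noteq> 0"
    using y(2) span_zero by blast
  moreover have "perp y (span Y)"
    using perp_y by (rule perp_subset) (intro span_mono, blast)
  moreover have "d y \<notin> d ` Y"
    using dy span_superset by blast
  moreover have "span (Y \<union> cycles k) \<subseteq> span (insert y Y \<union> cycles k)"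
    by (intro span_mono) blast
  ultimately show ?thesis
    using Y y min perp_span_insert[OF _ perp_y] orthogonal_set_insert[OF _ \<open>d y \<noteq> 0\<close> perp_dy]
      orthogonal_set_insert[of Y y]
    unfolding admissible_def by (auto 0 3)
qed

lemma span_admissible_subset_A:
  assumes "admissible k Y"
  shows "span (Y \<union> cycles k) \<subseteq> A k"
proof -
  have "Y \<union> cycles k \<subseteq> A k"
    using assms cycles_subset_A unfolding admissible_def by blast
  then show ?thesis
    by (rule span_minimal[OF _ subspace_A])
qed

lemma d_notin_span_d_image:
  assumes "Y \<subseteq> A k" "u \<in> A k" "u \<notin> span (Y \<union> cycles k)"
  shows "d u \<notin> span (d ` Y)"
proof
  assume "d u \<in> span (d ` Y)"
  then obtain a where a: "a \<in> span Y" "d u = d a"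
    by (auto simp: d.span_image)
  have "span Y \<subseteq> A k"
    using assms(1) by (rule span_minimal[OF _ subspace_A])
  then have "u - a \<in> cycles k"
    using assms(2) a subspace_diff[OF subspace_A] unfolding cycles_def by (auto simp: d.diff)
  then have "u - a \<in> span (Y \<union> cycles k)"
    by (simp add: span_base)
  moreover have "a \<in> span (Y \<union> cycles k)"
    using a(1) span_mono[of Y "Y \<union> cycles k"] by blast
  ultimately have "a + (u - a) \<in> span (Y \<union> cycles k)"
    by (rule span_add[rotated])
  with assms(3) show False
    by simp
qed

lemma exists_perp_boundary_correction:
  assumes "Y \<subseteq> A k" "u \<in> A k" "u \<notin> span (Y \<union> cycles k)"
  obtains a where "a \<in> span Y" "perp (d (u - a)) (span (d ` Y))"
proof -
  have "d u \<notin> span (d ` Y)"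
    using d_notin_span_d_image[OF assms] .
  moreover have "span (d ` Y) \<subseteq> A (k - 1)"
    using assms(1) d_in_A by (intro span_minimal[OF _ subspace_A]) blast
  ultimately obtain r where r: "d u - r \<in> span (d ` Y)" "perp r (span (d ` Y))"
    using best_approximation_residual[OF best_approximation subspace_A subspace_span]
      d_in_A[OF assms(2)] by metis
  then obtain a where "a \<in> span Y" "d u - r = d a"
    by (auto simp: d.span_image)
  moreover have "d (u - a) = r"
    using \<open>d u - r = d a\<close> by (simp add: d.diff algebra_simps)
  ultimately show thesis
    using r(2) that by simp
qed

text \<open>The new element is a minimiser of the filtration outside span (Y \<union> cycles k),
  corrected by an element of span Y so that its boundary becomes perpendicular to d ` Y;
  the correction does not raise the level, since every element of Y lies below the minimum.\<close>
lemma admissible_extend: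
  assumes Y: "admissible k Y" and not_spanning: "\<not> A k \<subseteq> span (Y \<union> cycles k)"
  obtains y where "y \<notin> Y" "admissible k (insert y Y)"
proof -
  define W where "W = span (Y \<union> cycles k)"
  have "Y \<subseteq> A k"
    using Y unfolding admissible_def by blast
  have W: "subspace W" "W \<subseteq> A k" and spanY: "span Y \<subseteq> W"
    unfolding W_def using span_admissible_subset_A[OF Y] span_mono[of Y "Y \<union> cycles k"] by auto
  obtain u0 where u0: "u0 \<in> A k" "u0 \<notin> W" "\<And>u. u \<in> A k \<Longrightarrow> u \<notin> W \<Longrightarrow> l u0 \<le> l u"
    using best_approximation_min_outside[OF best_approximation subspace_A W] not_spanning W_def
    by blast
  obtain a0 where a0: "a0 \<in> span Y" "perp (d (u0 - a0)) (span (d ` Y))"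
    using exists_perp_boundary_correction \<open>Y \<subseteq> A k\<close> u0(1,2) unfolding W_def by metis
  define y where "y = u0 - a0"
  have "y \<in> A k"
    unfolding y_def using u0(1) a0(1) spanY W(2) subspace_diff[OF subspace_A] by blast
  moreover have "y \<notin> W"
    unfolding y_def using u0(2) a0(1) spanY subspace_add[OF W(1)] by (metis diff_add_cancel subsetD)
  moreover have "l y \<le> l u0"
  proof -
    have "l a0 \<le> l u0"
      using a0(1) Y u0 unfolding admissible_def W_def by (auto intro: l_span_le)
    then show ?thesis
      unfolding y_def using l_diff_le[of u0 a0] by simp
  qed
  then have min: "l y \<le> l u" if "u \<in> A k" "u \<notin> W" for u
    using u0(3)[OF that] by simp
  ultimately have "admissible k (insert y Y)"
    using admissible_insert[OF Y] perp_of_min_outside[OF subspace_A W(1,2)] a0(2) min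
    unfolding W_def y_def by blast
  moreover have "y \<notin> Y"
    using \<open>y \<notin> W\<close> span_superset unfolding W_def by blast
  ultimately show thesis
    using that by blast
qed

lemma exists_admissible_spanning:
  obtains Y where "admissible k Y" "A k \<subseteq> span (Y \<union> cycles k)"
proof -
  obtain M where M: "admissible k M" "\<And>X. admissible k X \<Longrightarrow> M \<subseteq> X \<Longrightarrow> X = M"
    using subset_Zorn'[of "{Y. admissible k Y}"] admissible_Union_chain by auto
  have "A k \<subseteq> span (M \<union> cycles k)"
  proof (rule ccontr)
    assume "\<not> ?thesis"
    then obtain y where "y \<notin> M" "admissible k (insert y M)"
      using admissible_extend[OF M(1)] by blast
    then show False
      using M(2)[of "insert y M"] by blast
  qed
  with M(1) show thesis
    by (rule that)
qed

lemma admissible_boundaries_basis: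
  assumes Y1: "admissible (k + 1) Y1" "A (k + 1) \<subseteq> span (Y1 \<union> cycles (k + 1))"
    and Y0: "admissible k Y0" "A k \<subseteq> span (Y0 \<union> cycles k)"
  shows "d ` Y1 \<inter> Y0 = {}" "d ` Y1 \<union> Y0 \<subseteq> A k" "orthogonal_set (d ` Y1 \<union> Y0)"
    "span (d ` Y1 \<union> Y0) = A k"
proof -
  have dY1: "d ` Y1 \<subseteq> cycles k"
    using Y1(1) d_in_cycles unfolding admissible_def by blast
  have "d y \<noteq> 0" if "y \<in> Y0" for y
    using Y0(1) that unfolding admissible_def orthogonal_set_def by blast
  then show "d ` Y1 \<inter> Y0 = {}"
    using dY1 unfolding cycles_def by blast
  show sub: "d ` Y1 \<union> Y0 \<subseteq> A k"
    using dY1 cycles_subset_A Y0(1) unfolding admissible_def by blast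
  have "span (d ` Y1) \<subseteq> cycles k"
    using dY1 subspace_cycles by (rule span_minimal)
  then show "orthogonal_set (d ` Y1 \<union> Y0)"
    using Y1(1) Y0(1) perp_subset unfolding admissible_def by (intro orthogonal_set_Un) auto
  have "cycles k \<subseteq> span (d ` Y1)"
    using Y1 unfolding admissible_def by (intro cycles_subset_span_d) auto
  then have "Y0 \<union> cycles k \<subseteq> span (d ` Y1 \<union> Y0)"
    using span_mono[of "d ` Y1" "d ` Y1 \<union> Y0"] span_superset[of "d ` Y1 \<union> Y0"] by blast
  then have "A k \<subseteq> span (d ` Y1 \<union> Y0)"
    using Y0(2) span_minimal[OF _ subspace_span] by blast
  then show "span (d ` Y1 \<union> Y0) = A k"
    using sub subspace_A span_minimal by blast
qed

end

theorem proposition3p13: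
  fixes scale :: "'k::field \<Rightarrow> 'v::ab_group_add \<Rightarrow> 'v"
    and A :: "int \<Rightarrow> 'v set" and d :: "'v \<Rightarrow> 'v" and l :: "'v \<Rightarrow> ereal"
  assumes "ascending_chain_complex scale A d l"
    and "acyclic_complex A d"
    and "\<forall>k. best_approximation_property scale l (A k)"
  shows "\<exists>(I :: int \<Rightarrow> 'v set) (x :: int \<Rightarrow> 'v \<Rightarrow> 'v) (y :: int \<Rightarrow> 'v \<Rightarrow> 'v).
           \<forall>k. inj_on (x k) (I (k + 1)) \<and> inj_on (y k) (I k) \<and>
               x k ` I (k + 1) \<inter> y k ` I k = {} \<and>
               x k ` I (k + 1) \<union> y k ` I k \<subseteq> A k \<and>
               \<not> module.dependent scale (x k ` I (k + 1) \<union> y k ` I k) \<and>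
               module.span scale (x k ` I (k + 1) \<union> y k ` I k) = A k \<and>
               l_orthogonal scale l (A k) (x k ` I (k + 1) \<union> y k ` I k) \<and>
               (\<forall>i \<in> I (k + 1). d (y (k + 1) i) = x k i)"
proof -
  interpret acyclic_filtered_complex scale A d l
    using assms by unfold_locales auto
  have "\<forall>k. \<exists>Y. admissible k Y \<and> A k \<subseteq> span (Y \<union> cycles k)"
    using exists_admissible_spanning by metis
  then obtain Y where Y: "\<And>k. admissible k (Y k)" "\<And>k. A k \<subseteq> span (Y k \<union> cycles k)"
    by metis
  show ?thesis
  proof (rule exI[of _ Y], rule exI[of _ "\<lambda>_. d"], rule exI[of _ "\<lambda>_. id"], intro allI,
      goal_cases)
    case (1 k)
    show ?case
      using admissible_boundaries_basis[OF Y(1,2)[of "k + 1"] Y(1,2)[of k]] Y(1)[of "k + 1"]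
        orthogonal_set_independent orthogonal_set_l_orthogonal
      unfolding admissible_def by simp
  qed
qed

end
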